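(* Let $X\in\mathcal A$, let $\vec\sigma$ be a preference profile and $w_X$ an $X$-truncated weight function for $\vec\sigma$. Then for every pseudometric $d$ consistent with $\vec\sigma$, $$\mathrm{SC}(X,d)\ge \frac12\sum_{Y\in\mathcal A}w_X^+(Y)\,d(X,Y).$$
   Context: Setting: $n$ agents $\mathcal N$, $m$ alternatives $\mathcal A$, each agent $i$ with a strict ranking; $X\succ_iY$ means $i$ ranks $X$ above $Y$, and $Y\succeq_iX$ means $Y\succ_iX$ or $Y=X$. A pseudometric $d$ on $\mathcal N\cup\mathcal A$ is consistent with $\vec\sigma$ if $X\succ_iY\Rightarrow d(i,X)\le d(i,Y)$; $\mathrm{SC}(X,d)=\sum_{i}d(i,X)$. An $X$-truncated weight function is $w:\mathcal N\times\mathcal A\to[0,1]$ such that for every agent $i$: $w(i,Y)=0$ whenever $X\succ_iY$, and $\sum_{Y:\,Y\succeq_iX}w(i,Y)=1$. Write $w^+(Y)=\sum_{i\in\mathcal N}w(i,Y)$. *)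

theory Defs
  imports Complex_Main
begin

text \<open>Agents have type 'n, alternatives type 'a; the joint space N \<union> A is the
  disjoint union ('n + 'a), agents as Inl, alternatives as Inr.\<close>

definition pseudometric_on :: "'v set \<Rightarrow> ('v \<Rightarrow> 'v \<Rightarrow> real) \<Rightarrow> bool" where
  "pseudometric_on S d \<longleftrightarrow>
     (\<forall>x\<in>S. d x x = 0) \<and>
     (\<forall>x\<in>S. \<forall>y\<in>S. d x y \<ge> 0) \<and>
     (\<forall>x\<in>S. \<forall>y\<in>S. d x y = d y x) \<and>
     (\<forall>x\<in>S. \<forall>y\<in>S. \<forall>z\<in>S. d x z \<le> d x y + d y z)"

text \<open>A preference profile: each agent i has a strict ranking \<sigma> i of A,
  where (X,Y) \<in> \<sigma> i means X \<succ>_i Y.\<close>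
definition profile :: "'n set \<Rightarrow> 'a set \<Rightarrow> ('n \<Rightarrow> ('a \<times> 'a) set) \<Rightarrow> bool" where
  "profile N A \<sigma> \<longleftrightarrow> (\<forall>i\<in>N. \<sigma> i \<subseteq> A \<times> A \<and> strict_linear_order_on A (\<sigma> i))"

definition consistent ::
  "'n set \<Rightarrow> 'a set \<Rightarrow> ('n \<Rightarrow> ('a \<times> 'a) set) \<Rightarrow> ('n + 'a \<Rightarrow> 'n + 'a \<Rightarrow> real) \<Rightarrow> bool" where
  "consistent N A \<sigma> d \<longleftrightarrow>
     pseudometric_on (Inl ` N \<union> Inr ` A) d \<and>
     (\<forall>i\<in>N. \<forall>X\<in>A. \<forall>Y\<in>A. (X, Y) \<in> \<sigma> i \<longrightarrow> d (Inl i) (Inr X) \<le> d (Inl i) (Inr Y))"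

definition social_cost :: "'n set \<Rightarrow> 'a \<Rightarrow> ('n + 'a \<Rightarrow> 'n + 'a \<Rightarrow> real) \<Rightarrow> real" where
  "social_cost N X d = (\<Sum>i\<in>N. d (Inl i) (Inr X))"

definition truncated_weight ::
  "'n set \<Rightarrow> 'a set \<Rightarrow> ('n \<Rightarrow> ('a \<times> 'a) set) \<Rightarrow> 'a \<Rightarrow> ('n \<Rightarrow> 'a \<Rightarrow> real) \<Rightarrow> bool" where
  "truncated_weight N A \<sigma> X w \<longleftrightarrow>
     (\<forall>i\<in>N. \<forall>Y\<in>A. 0 \<le> w i Y \<and> w i Y \<le> 1) \<and>
     (\<forall>i\<in>N. \<forall>Y\<in>A. (X, Y) \<in> \<sigma> i \<longrightarrow> w i Y = 0) \<and>
     (\<forall>i\<in>N. (\<Sum>Y\<in>{Y\<in>A. (Y, X) \<in> \<sigma> i \<or> Y = X}. w i Y) = 1)"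

definition wplus :: "'n set \<Rightarrow> ('n \<Rightarrow> 'a \<Rightarrow> real) \<Rightarrow> 'a \<Rightarrow> real" where
  "wplus N w Y = (\<Sum>i\<in>N. w i Y)"

end

theory Submission
  imports Defs
begin

(* Fix an agent i. Every alternative Y with positive weight is ranked by i at least as
   high as X, so by consistency d(i,Y) <= d(i,X), and the triangle inequality through i
   gives d(X,Y) <= 2 d(i,X). Since i's weights sum to 1, i contributes at most 2 d(i,X)
   to the weighted sum; summing over agents yields twice the social cost of X. *)

lemma pseudometric_on_dist_le_twice:
  assumes "pseudometric_on S d" and "a \<in> S" "x \<in> S" "y \<in> S"
    and "d a y \<le> d a x"
  shows "d x y \<le> 2 * d a x"
proof -
  have "d x y \<le> d x a + d a y" and "d x a = d a x"
    using assms(1-4) unfolding pseudometric_on_def by blast+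
  with assms(5) show ?thesis by linarith
qed

lemma truncated_weight_nonneg:
  "truncated_weight N A \<sigma> X w \<Longrightarrow> i \<in> N \<Longrightarrow> Y \<in> A \<Longrightarrow> 0 \<le> w i Y"
  unfolding truncated_weight_def by blast

lemma truncated_weight_sum_eq:
  assumes "finite A" and "X \<in> A" and "i \<in> N"
    and "profile N A \<sigma>" and "truncated_weight N A \<sigma> X w"
  shows "(\<Sum>Y\<in>A. w i Y * f Y) = (\<Sum>Y\<in>{Y\<in>A. (Y, X) \<in> \<sigma> i \<or> Y = X}. w i Y * f Y)"
proof (rule sum.mono_neutral_right)
  show "finite A" "{Y\<in>A. (Y, X) \<in> \<sigma> i \<or> Y = X} \<subseteq> A" using assms(1) by auto
next
  show "\<forall>Y\<in>A - {Y\<in>A. (Y, X) \<in> \<sigma> i \<or> Y = X}. w i Y * f Y = 0"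
  proof
    fix Y assume "Y \<in> A - {Y\<in>A. (Y, X) \<in> \<sigma> i \<or> Y = X}"
    then have Y: "Y \<in> A" "Y \<noteq> X" "(Y, X) \<notin> \<sigma> i" by auto
    then have "(X, Y) \<in> \<sigma> i"
      using assms(2-4) unfolding profile_def strict_linear_order_on_def total_on_def by blast
    with Y(1) assms(3,5) show "w i Y * f Y = 0"
      unfolding truncated_weight_def by simp
  qed
qed

lemma agent_weighted_dist_le:
  assumes "finite A" and "X \<in> A" and "i \<in> N"
    and "profile N A \<sigma>" and "truncated_weight N A \<sigma> X w" and "consistent N A \<sigma> d"
  shows "(\<Sum>Y\<in>A. w i Y * d (Inr X) (Inr Y)) \<le> 2 * d (Inl i) (Inr X)"
proof -
  define S where "S = {Y\<in>A. (Y, X) \<in> \<sigma> i \<or> Y = X}"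
  have pm: "pseudometric_on (Inl ` N \<union> Inr ` A) d"
    using assms(6) unfolding consistent_def by blast
  have "(\<Sum>Y\<in>A. w i Y * d (Inr X) (Inr Y)) = (\<Sum>Y\<in>S. w i Y * d (Inr X) (Inr Y))"
    unfolding S_def using truncated_weight_sum_eq[OF assms(1-5)] .
  also have "\<dots> \<le> (\<Sum>Y\<in>S. w i Y * (2 * d (Inl i) (Inr X)))"
  proof (rule sum_mono)
    fix Y assume Y: "Y \<in> S"
    then have YA: "Y \<in> A" unfolding S_def by blast
    have "d (Inl i) (Inr Y) \<le> d (Inl i) (Inr X)"
      using Y assms(2,3,6) YA unfolding S_def consistent_def by auto
    then have "d (Inr X) (Inr Y) \<le> 2 * d (Inl i) (Inr X)"
      using pseudometric_on_dist_le_twice[OF pm] assms(2,3) YA by blast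
    then show "w i Y * d (Inr X) (Inr Y) \<le> w i Y * (2 * d (Inl i) (Inr X))"
      using truncated_weight_nonneg[OF assms(5,3) YA] by (rule mult_left_mono)
  qed
  also have "\<dots> = 2 * d (Inl i) (Inr X)"
    using assms(3,5) unfolding S_def truncated_weight_def by (simp add: sum_distrib_right[symmetric])
  finally show ?thesis .
qed

lemma sum_wplus_mult:
  assumes "finite A"
  shows "(\<Sum>Y\<in>A. wplus N w Y * f Y) = (\<Sum>i\<in>N. \<Sum>Y\<in>A. w i Y * f Y)"
  unfolding wplus_def by (simp add: sum_distrib_right sum.swap[of _ A])

theorem mainTheorem5:
  fixes N :: "'n set" and A :: "'a set" and \<sigma> :: "'n \<Rightarrow> ('a \<times> 'a) set"
    and X :: 'a and w :: "'n \<Rightarrow> 'a \<Rightarrow> real" and d :: "'n + 'a \<Rightarrow> 'n + 'a \<Rightarrow> real"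
  assumes "finite N" and "finite A"
    and "X \<in> A"
    and "profile N A \<sigma>"
    and "truncated_weight N A \<sigma> X w"
    and "consistent N A \<sigma> d"
  shows "social_cost N X d \<ge> 1/2 * (\<Sum>Y\<in>A. wplus N w Y * d (Inr X) (Inr Y))"
proof -
  have "(\<Sum>Y\<in>A. wplus N w Y * d (Inr X) (Inr Y)) = (\<Sum>i\<in>N. \<Sum>Y\<in>A. w i Y * d (Inr X) (Inr Y))"
    using assms(2) by (rule sum_wplus_mult)
  also have "\<dots> \<le> (\<Sum>i\<in>N. 2 * d (Inl i) (Inr X))"
    by (rule sum_mono) (rule agent_weighted_dist_le[OF assms(2,3) _ assms(4-6)])
  also have "\<dots> = 2 * social_cost N X d"
    unfolding social_cost_def by (simp add: sum_distrib_left)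
  finally show ?thesis by simp
qed

end
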